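(* Let $\Pi=(\mathsf A,\mathsf B)$ and $\Pi'=(\mathsf C,\mathsf D)$ be two $m$-round protocols with $\chi_\Pi\equiv\chi_{\Pi'}$, and let $\mathcal F$ be a frontier of nodes. Assume that $\mathrm{SD}(L_\Pi,L_{\Pi'})\le\varepsilon$, $\Pr_{\ell\leftarrow L_\Pi}[\ell\in\mathcal L_1(\Pi)\mid \ell\in\mathrm{desc}(\mathcal F)]\le\alpha$ and $\Pr_{\ell\leftarrow L_{\Pi'}}[\ell\in\mathcal L_1(\Pi)\mid \ell\in\mathrm{desc}(\mathcal F)]\ge\beta$, for some $\varepsilon>0$ and $0\le\alpha<\beta\le1$. Then $\Pr_{\ell\leftarrow L_\Pi}[\ell\in\mathrm{desc}(\mathcal F)]\le\varepsilon\cdot\frac{1+\beta}{\beta-\alpha}$.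
   Context: An $m$-round single-bit-message protocol is identified with the complete binary tree of height $m$ (nodes are binary strings of length at most $m$, leaves have length $m$); $e_\Pi(u,ub)$ is the probability the next bit is $b$ given transcript $u$, $L_\Pi$ is the distribution of the leaf (full transcript) of a random execution, and $\chi_\Pi$ maps each leaf to the common output in $\{0,1\}$. $\mathcal L_1(\Pi)=\{\ell:\chi_\Pi(\ell)=1\}$. $\mathrm{desc}(\mathcal F)$ is the set of nodes having an ancestor (possibly itself) in $\mathcal F$. A frontier is a set of nodes no one of which is a proper descendant of another. $\mathrm{SD}$ is statistical distance. *)

theory Defs
  imports Complex_Main "HOL-Library.Sublist"
begin

text \<open>Nodes of the complete binary tree of height m are bit strings of length at most m;
  leaves have length exactly m.  A protocol is given by its edge probabilities
  e u b = probability that the next bit is b given transcript u.\<close>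

definition nodes :: "nat \<Rightarrow> bool list set" where
  "nodes m = {u. length u \<le> m}"

definition leaves :: "nat \<Rightarrow> bool list set" where
  "leaves m = {l. length l = m}"

definition is_protocol :: "nat \<Rightarrow> (bool list \<Rightarrow> bool \<Rightarrow> real) \<Rightarrow> bool" where
  "is_protocol m e = (\<forall>u. length u < m \<longrightarrow>
      e u True \<ge> 0 \<and> e u False \<ge> 0 \<and> e u True + e u False = 1)"

definition leaf_prob :: "nat \<Rightarrow> (bool list \<Rightarrow> bool \<Rightarrow> real) \<Rightarrow> bool list \<Rightarrow> real" where
  "leaf_prob m e l = (if length l = m then (\<Prod>i<m. e (take i l) (l ! i)) else 0)"

definition prob_of :: "nat \<Rightarrow> (bool list \<Rightarrow> bool \<Rightarrow> real) \<Rightarrow> bool list set \<Rightarrow> real" where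
  "prob_of m e S = (\<Sum>l\<in>leaves m \<inter> S. leaf_prob m e l)"

text \<open>Conditional probability Pr[A | B] (with the HOL convention x / 0 = 0).\<close>
definition cond_prob :: "nat \<Rightarrow> (bool list \<Rightarrow> bool \<Rightarrow> real) \<Rightarrow> bool list set \<Rightarrow> bool list set \<Rightarrow> real" where
  "cond_prob m e A B = prob_of m e (A \<inter> B) / prob_of m e B"

definition SD :: "nat \<Rightarrow> (bool list \<Rightarrow> bool \<Rightarrow> real) \<Rightarrow> (bool list \<Rightarrow> bool \<Rightarrow> real) \<Rightarrow> real" where
  "SD m e e' = (1/2) * (\<Sum>l\<in>leaves m. \<bar>leaf_prob m e l - leaf_prob m e' l\<bar>)"

definition desc :: "bool list set \<Rightarrow> bool list set" where
  "desc F = {v. \<exists>u\<in>F. prefix u v}"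

definition frontier :: "nat \<Rightarrow> bool list set \<Rightarrow> bool" where
  "frontier m F = (F \<subseteq> nodes m \<and> (\<forall>u\<in>F. \<forall>v\<in>F. \<not> strict_prefix u v))"

text \<open>Leaves with output 1 (chi l = True means output 1).\<close>
definition L1 :: "nat \<Rightarrow> (bool list \<Rightarrow> bool) \<Rightarrow> bool list set" where
  "L1 m chi = {l \<in> leaves m. chi l}"

end

theory Submission
  imports Defs
begin

text \<open>Statistical distance bounds the difference of the two probabilities of any event, so
  both the mass of \<open>desc F\<close> and the mass of \<open>L\<^sub>1 \<inter> desc F\<close> move by at most \<open>\<epsilon>\<close>
  from \<open>L\<^sub>\<Pi>\<close> to \<open>L\<^sub>\<Pi>'\<close>. Writing \<open>p, q\<close> for the masses of \<open>desc F\<close> and \<open>a, b\<close> for those of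
  \<open>L\<^sub>1 \<inter> desc F\<close> under the two distributions, the conditional bounds give
  \<open>a \<le> \<alpha> p\<close> and \<open>b \<ge> \<beta> q\<close>, hence
  \<open>\<beta> p \<le> \<beta> (q + \<epsilon>) \<le> b + \<beta> \<epsilon> \<le> a + \<epsilon> + \<beta> \<epsilon> \<le> \<alpha> p + \<epsilon> (1 + \<beta>)\<close>.\<close>

definition path_prob :: "(bool list \<Rightarrow> bool \<Rightarrow> real) \<Rightarrow> bool list \<Rightarrow> real" where
  "path_prob e l = (\<Prod>i<length l. e (take i l) (l ! i))"

lemma leaf_prob_eq_path_prob: "leaf_prob m e l = (if length l = m then path_prob e l else 0)"
  unfolding leaf_prob_def path_prob_def by simp

lemma path_prob_snoc: "path_prob e (l @ [b]) = path_prob e l * e l b"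
proof -
  have "(\<Prod>i<length l. e (take i (l @ [b])) ((l @ [b]) ! i)) = path_prob e l"
    unfolding path_prob_def by (intro prod.cong) (auto simp: nth_append)
  then show ?thesis
    unfolding path_prob_def by simp
qed

lemma lists_length_Suc_eq_snoc:
  "{l. length l = Suc n} = (\<lambda>(l, b). l @ [b]) ` ({l. length l = n} \<times> UNIV)"
proof (intro set_eqI iffI)
  fix l :: "'a list"
  assume "l \<in> {l. length l = Suc n}"
  then have "l = butlast l @ [last l]" "length (butlast l) = n"
    by (auto intro: append_butlast_last_id[symmetric])
  then show "l \<in> (\<lambda>(l, b). l @ [b]) ` ({l. length l = n} \<times> UNIV)"
    by (intro image_eqI[of _ _ "(butlast l, last l)"]) auto
qed auto

lemma sum_path_prob_eq_1:
  assumes "is_protocol m e" "n \<le> m"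
  shows "(\<Sum>l | length l = n. path_prob e l) = 1"
  using assms(2)
proof (induction n)
  case 0
  then show ?case
    by (simp add: path_prob_def)
next
  case (Suc n)
  have inj: "inj_on (\<lambda>(l, b). l @ [b]) ({l :: bool list. length l = n} \<times> UNIV)"
    by (auto simp: inj_on_def)
  have "(\<Sum>l | length l = Suc n. path_prob e l)
      = (\<Sum>l | length l = n. \<Sum>b\<in>UNIV. path_prob e (l @ [b]))"
    unfolding lists_length_Suc_eq_snoc sum.reindex[OF inj]
    by (simp add: sum.cartesian_product case_prod_beta')
  also have "\<dots> = (\<Sum>l | length l = n. path_prob e l * (e l True + e l False))"
    by (simp add: path_prob_snoc UNIV_bool distrib_left add.commute)
  also have "\<dots> = (\<Sum>l | length l = n. path_prob e l)"
    using assms(1) Suc.prems by (intro sum.cong) (auto simp: is_protocol_def)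
  finally show ?case
    using Suc by simp
qed

lemma sum_leaf_prob_eq_1:
  assumes "is_protocol m e"
  shows "(\<Sum>l\<in>leaves m. leaf_prob m e l) = 1"
  using sum_path_prob_eq_1[OF assms order_refl]
  by (simp add: leaves_def leaf_prob_eq_path_prob)

lemma leaf_prob_nonneg:
  assumes "is_protocol m e"
  shows "leaf_prob m e l \<ge> 0"
proof -
  have "e u b \<ge> 0" if "length u < m" for u b
    using assms that unfolding is_protocol_def by (cases b) auto
  then show ?thesis
    unfolding leaf_prob_def by (auto intro!: prod_nonneg)
qed

lemma prob_of_nonneg: "is_protocol m e \<Longrightarrow> prob_of m e S \<ge> 0"
  unfolding prob_of_def by (intro sum_nonneg leaf_prob_nonneg)

lemma prob_of_mono:
  assumes "is_protocol m e" "S \<subseteq> T"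
  shows "prob_of m e S \<le> prob_of m e T"
  unfolding prob_of_def using assms
  by (intro sum_mono2) (auto simp: leaves_def leaf_prob_nonneg finite_Int finite_list_length)

lemma SD_commute: "SD m e e' = SD m e' e"
  unfolding SD_def by (simp add: abs_minus_commute)

lemma prob_of_diff_le_SD:
  assumes "is_protocol m e" "is_protocol m e'"
  shows "prob_of m e S - prob_of m e' S \<le> SD m e e'"
proof -
  define d where "d l = leaf_prob m e l - leaf_prob m e' l" for l
  have fin: "finite (leaves m)"
    by (simp add: leaves_def finite_list_length)
  have in_S: "(\<Sum>l\<in>leaves m \<inter> S. d l) = prob_of m e S - prob_of m e' S"
    unfolding d_def prob_of_def by (simp add: sum_subtractf)
  have "(\<Sum>l\<in>leaves m. d l) = 0"
    unfolding d_def using assms by (simp add: sum_subtractf sum_leaf_prob_eq_1)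
  then have out_S: "(\<Sum>l\<in>leaves m - S. d l) = - (prob_of m e S - prob_of m e' S)"
    using sum.Int_Diff[OF fin, of d S] in_S by simp
  have "2 * (prob_of m e S - prob_of m e' S) = (\<Sum>l\<in>leaves m \<inter> S. d l) - (\<Sum>l\<in>leaves m - S. d l)"
    using in_S out_S by simp
  also have "\<dots> \<le> (\<Sum>l\<in>leaves m \<inter> S. \<bar>d l\<bar>) + (\<Sum>l\<in>leaves m - S. \<bar>d l\<bar>)"
    unfolding diff_conv_add_uminus sum_negf[symmetric] by (intro add_mono sum_mono) auto
  also have "\<dots> = 2 * SD m e e'"
    unfolding SD_def using sum.Int_Diff[OF fin, of "\<lambda>l. \<bar>d l\<bar>" S] by (simp add: d_def)
  finally show ?thesis
    by simp
qed

lemma prob_of_Int_le_if_cond_prob_le: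
  assumes "is_protocol m e" "cond_prob m e A B \<le> \<alpha>"
  shows "prob_of m e (A \<inter> B) \<le> \<alpha> * prob_of m e B"
proof (cases "prob_of m e B = 0")
  case True
  then show ?thesis
    using prob_of_mono[OF assms(1), of "A \<inter> B" B] by simp
next
  case False
  then have "prob_of m e B > 0"
    using prob_of_nonneg[OF assms(1)] by (simp add: order_less_le)
  then show ?thesis
    using assms(2) by (simp add: cond_prob_def divide_le_eq mult.commute)
qed

lemma prob_of_Int_ge_if_cond_prob_ge:
  assumes "is_protocol m e" "cond_prob m e A B \<ge> \<beta>"
  shows "prob_of m e (A \<inter> B) \<ge> \<beta> * prob_of m e B"
proof (cases "prob_of m e B = 0")
  case True
  then show ?thesis
    using prob_of_nonneg[OF assms(1), of "A \<inter> B"] by simp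
next
  case False
  then have "prob_of m e B > 0"
    using prob_of_nonneg[OF assms(1)] by (simp add: order_less_le)
  then show ?thesis
    using assms(2) by (simp add: cond_prob_def le_divide_eq mult.commute)
qed

theorem proposition2p8:
  fixes m :: nat and e e' :: "bool list \<Rightarrow> bool \<Rightarrow> real"
    and chi :: "bool list \<Rightarrow> bool" and F :: "bool list set"
    and \<epsilon> \<alpha> \<beta> :: real
  assumes "is_protocol m e" and "is_protocol m e'"
    and "frontier m F"
    and "SD m e e' \<le> \<epsilon>"
    and "cond_prob m e (L1 m chi) (desc F) \<le> \<alpha>"
    and "cond_prob m e' (L1 m chi) (desc F) \<ge> \<beta>"
    and "\<epsilon> > 0" and "0 \<le> \<alpha>" and "\<alpha> < \<beta>" and "\<beta> \<le> 1"
  shows "prob_of m e (desc F) \<le> \<epsilon> * (1 + \<beta>) / (\<beta> - \<alpha>)"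
proof -
  define p where "p = prob_of m e (desc F)"
  define q where "q = prob_of m e' (desc F)"
  define a where "a = prob_of m e (L1 m chi \<inter> desc F)"
  define b where "b = prob_of m e' (L1 m chi \<inter> desc F)"
  have "a \<le> \<alpha> * p"
    using prob_of_Int_le_if_cond_prob_le[OF assms(1,5)] by (simp add: a_def p_def)
  moreover have "\<beta> * q \<le> b"
    using prob_of_Int_ge_if_cond_prob_ge[OF assms(2,6)] by (simp add: b_def q_def)
  moreover have "b - a \<le> \<epsilon>"
    using prob_of_diff_le_SD[OF assms(2,1), of "L1 m chi \<inter> desc F"] assms(4) SD_commute[of m e' e]
    by (simp add: a_def b_def)
  moreover have "\<beta> * p \<le> \<beta> * (q + \<epsilon>)"
    using prob_of_diff_le_SD[OF assms(1,2), of "desc F"] assms(4,8,9)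
    by (intro mult_left_mono) (simp_all add: p_def q_def)
  ultimately have "p * (\<beta> - \<alpha>) \<le> \<epsilon> * (1 + \<beta>)"
    by (simp add: algebra_simps)
  then show ?thesis
    using assms(9) by (simp add: p_def le_divide_eq)
qed

end
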